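(* Let $d\ge0$ and $\alpha_i\in(0,1/i]$ for every $i\in\{1,\dots,d+1\}$, and consider $P=\mathbb Z_{\ge0}^{d+1}$. Then for every $v\in P$ and every integer $t\ge0$, $$\sum_{u\in L_t}p(u\to v)\le1.$$
   Context: Finite model: $P=\mathbb{Z}_{\ge0}^{d+1}$ with $u\le v$ iff $v-u\in\mathbb{Z}_{\ge0}^{d+1}$; $L_t$ = tuples with coordinate sum $t$; $\mathfrak p(v)$ = set of elements covered by $v$, so $|\mathfrak p(v)|$ is the number of positive coordinates of $v$. Path weights: each covering pair $u\lessdot v$ gives a directed edge $u\to v$ of weight $\alpha_{|\mathfrak p(v)|}$; for $u,v\in P$, $p(u\to v)$ is the sum over all directed paths (saturated chains) from $u$ to $v$ of the product of edge weights, with $p(v\to v)=1$ and $p(u\to v)=0$ if $u\not\le v$. *)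

theory Defs
  imports Complex_Main
begin

text \<open>Elements of P = Z_{>=0}^{d+1} are represented as lists of naturals of length d+1.\<close>

definition lattice_pts :: "nat \<Rightarrow> nat list set" where
  "lattice_pts d = {x. length x = d + 1}"

definition level :: "nat \<Rightarrow> nat \<Rightarrow> nat list set" where
  "level d t = {x. length x = d + 1 \<and> sum_list x = t}"

definition covers :: "nat list \<Rightarrow> nat list \<Rightarrow> bool" where
  "covers u v \<longleftrightarrow> length v = length u \<and> (\<exists>i < length u. v = u[i := u ! i + 1])"

definition npos :: "nat list \<Rightarrow> nat" where
  "npos v = card {i. i < length v \<and> v ! i > 0}"

definition sat_chains :: "nat list \<Rightarrow> nat list \<Rightarrow> nat list list set" where
  "sat_chains u v = {xs. xs \<noteq> [] \<and> hd xs = u \<and> last xs = v \<and>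
      (\<forall>i. Suc i < length xs \<longrightarrow> covers (xs ! i) (xs ! Suc i))}"

definition chain_weight :: "(nat \<Rightarrow> real) \<Rightarrow> nat list list \<Rightarrow> real" where
  "chain_weight \<alpha> xs = (\<Prod>i < length xs - 1. \<alpha> (npos (xs ! Suc i)))"

definition path_weight :: "(nat \<Rightarrow> real) \<Rightarrow> nat list \<Rightarrow> nat list \<Rightarrow> real" where
  "path_weight \<alpha> u v = (\<Sum>xs \<in> sat_chains u v. chain_weight \<alpha> xs)"

end

theory Submission
  imports Defs
begin

text \<open>
  Splitting off the last edge of a chain gives \<open>p(u \<rightarrow> v) = \<alpha>\<^sub>k \<cdot> \<Sum>\<^sub>w p(u \<rightarrow> w)\<close>,
  the sum ranging over the at most \<open>k = npos v\<close> elements \<open>w\<close> covered by \<open>v\<close>.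
  Summing over \<open>u \<in> L\<^sub>t\<close> and inducting on the coordinate sum of \<open>v\<close> bounds the total
  by \<open>\<alpha>\<^sub>k \<cdot> k \<le> 1\<close>. Once the coordinate sum of \<open>v\<close> is at most \<open>t\<close> the total is
  \<open>0\<close> or \<open>1\<close>, since every edge raises the coordinate sum by one.
\<close>

lemma covers_length_sum_list:
  "covers w v \<Longrightarrow> length v = length w \<and> sum_list v = Suc (sum_list w)"
  unfolding covers_def by (auto simp: sum_list_update)

lemma covers_imp_decrement:
  assumes "covers w v"
  obtains i where "i < length v" "0 < v ! i" "w = v[i := v ! i - 1]"
proof -
  from assms obtain i where i: "i < length w" "v = w[i := w ! i + 1]"
    unfolding covers_def by blast
  then have "i < length v" "v ! i = w ! i + 1" by simp_all
  moreover have "w = v[i := v ! i - 1]" using i by simp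
  ultimately show ?thesis using that by simp
qed

lemma finite_covered_by: "finite {w. covers w v}"
proof (rule finite_subset)
  show "{w. covers w v} \<subseteq> (\<lambda>i. v[i := v ! i - 1]) ` {..<length v}"
    by (blast elim: covers_imp_decrement)
qed simp

lemma card_covered_by_le_npos: "card {w. covers w v} \<le> npos v"
proof -
  have "{w. covers w v} \<subseteq> (\<lambda>i. v[i := v ! i - 1]) ` {i. i < length v \<and> 0 < v ! i}"
    by (blast elim: covers_imp_decrement)
  then have "card {w. covers w v} \<le> card ((\<lambda>i. v[i := v ! i - 1]) ` {i. i < length v \<and> 0 < v ! i})"
    by (rule card_mono[rotated]) simp
  also have "\<dots> \<le> npos v"
    unfolding npos_def by (rule card_image_le) simp
  finally show ?thesis .
qed

lemma npos_pos:
  assumes "0 < sum_list v"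
  shows "0 < npos v"
proof -
  have "\<exists>x \<in> set v. x \<noteq> 0"
  proof (rule ccontr)
    assume "\<not> ?thesis"
    then have "sum_list v = 0" by (simp add: sum_list_eq_0_iff)
    with assms show False by simp
  qed
  then obtain i where "i < length v" "0 < v ! i" by (auto simp: in_set_conv_nth)
  then have "{i. i < length v \<and> 0 < v ! i} \<noteq> {}" by blast
  then show ?thesis unfolding npos_def by (subst card_gt_0_iff) auto
qed

lemma npos_le_length: "npos v \<le> length v"
proof -
  have "npos v \<le> card {..<length v}"
    unfolding npos_def by (rule card_mono) auto
  then show ?thesis by simp
qed

lemma sat_chain_nth:
  assumes "xs \<in> sat_chains u v" "j < length xs"
  shows "length (xs ! j) = length u \<and> sum_list (xs ! j) = sum_list u + j"
  using assms(2)
proof (induction j)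
  case 0
  then show ?case using assms(1) by (auto simp: sat_chains_def hd_conv_nth)
next
  case (Suc j)
  then have "covers (xs ! j) (xs ! Suc j)" using assms(1) by (auto simp: sat_chains_def)
  with Suc show ?case by (auto dest: covers_length_sum_list)
qed

lemma sat_chain_last:
  assumes "xs \<in> sat_chains u v"
  shows "length v = length u \<and> sum_list v = sum_list u + (length xs - 1)"
proof -
  have "xs \<noteq> []" "v = xs ! (length xs - 1)"
    using assms by (auto simp: sat_chains_def last_conv_nth)
  then show ?thesis using sat_chain_nth[OF assms, of "length xs - 1"] by simp
qed

lemma sat_chain_not_rising:
  assumes "xs \<in> sat_chains u v" "sum_list v \<le> sum_list u"
  shows "xs = [u] \<and> v = u"
proof -
  have "xs \<noteq> []" "hd xs = u" "last xs = v" using assms(1) by (auto simp: sat_chains_def)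
  moreover have "length xs - 1 = 0" using sat_chain_last[OF assms(1)] assms(2) by simp
  then have "length xs = 1" using \<open>xs \<noteq> []\<close> by (cases xs) auto
  ultimately show ?thesis by (cases xs) auto
qed

lemma finite_sat_chains: "finite (sat_chains u v)"
proof -
  let ?B = "{x. set x \<subseteq> {0..sum_list v} \<and> length x = length u}"
  have "sat_chains u v \<subseteq> {xs. set xs \<subseteq> ?B \<and> length xs \<le> sum_list v + 1}"
  proof
    fix xs assume xs: "xs \<in> sat_chains u v"
    have "set xs \<subseteq> ?B"
    proof
      fix x assume "x \<in> set xs"
      then obtain j where j: "j < length xs" "x = xs ! j" by (auto simp: in_set_conv_nth)
      with sat_chain_nth[OF xs j(1)] sat_chain_last[OF xs]
      have "length x = length u" "sum_list x \<le> sum_list v" by auto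
      then show "x \<in> ?B" using member_le_sum_list[of _ x] by fastforce
    qed
    moreover have "length xs \<le> sum_list v + 1" using sat_chain_last[OF xs] by simp
    ultimately show "xs \<in> {xs. set xs \<subseteq> ?B \<and> length xs \<le> sum_list v + 1}" by simp
  qed
  moreover have "finite ?B" by (rule finite_lists_length_eq) simp
  ultimately show ?thesis using finite_lists_length_le finite_subset by blast
qed

lemma path_weight_self: "path_weight \<alpha> v v = 1"
proof -
  have "sat_chains v v = {[v]}"
    using sat_chain_not_rising[of _ v v] by (auto simp: sat_chains_def)
  then show ?thesis by (simp add: path_weight_def chain_weight_def)
qed

lemma path_weight_not_rising:
  assumes "sum_list v \<le> sum_list u" "u \<noteq> v"
  shows "path_weight \<alpha> u v = 0"
proof -
  have "sat_chains u v = {}" using sat_chain_not_rising assms by blast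
  then show ?thesis by (simp add: path_weight_def)
qed

lemma chain_weight_snoc:
  assumes "ys \<noteq> []"
  shows "chain_weight \<alpha> (ys @ [v]) = chain_weight \<alpha> ys * \<alpha> (npos v)"
proof -
  obtain n where n: "length ys = Suc n" using assms by (cases ys) auto
  have "chain_weight \<alpha> (ys @ [v]) = (\<Prod>i < n. \<alpha> (npos ((ys @ [v]) ! Suc i))) * \<alpha> (npos v)"
    using n by (simp add: chain_weight_def nth_append)
  also have "(\<Prod>i < n. \<alpha> (npos ((ys @ [v]) ! Suc i))) = chain_weight \<alpha> ys"
    using n by (auto simp: chain_weight_def nth_append intro: prod.cong)
  finally show ?thesis .
qed

lemma snoc_sat_chain:
  assumes "ys \<in> sat_chains u w" "covers w v"
  shows "ys @ [v] \<in> sat_chains u v"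
proof -
  have ne: "ys \<noteq> []" and "hd ys = u" and last: "last ys = w"
    and c: "\<And>i. Suc i < length ys \<Longrightarrow> covers (ys ! i) (ys ! Suc i)"
    using assms(1) by (auto simp: sat_chains_def)
  have "covers ((ys @ [v]) ! i) ((ys @ [v]) ! Suc i)" if "Suc i < length (ys @ [v])" for i
  proof (cases "Suc i < length ys")
    case True
    then show ?thesis using c by (simp add: nth_append)
  next
    case False
    with that have "Suc i = length ys" by simp
    moreover from this have "ys ! i = w" using last ne by (metis diff_Suc_1 last_conv_nth)
    ultimately show ?thesis using assms(2) by (simp add: nth_append)
  qed
  with ne \<open>hd ys = u\<close> show ?thesis by (simp add: sat_chains_def)
qed

lemma sat_chain_butlast:
  assumes "xs \<in> sat_chains u v" "u \<noteq> v"
  shows "butlast xs \<in> sat_chains u (last (butlast xs)) \<and> covers (last (butlast xs)) v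
    \<and> xs = butlast xs @ [v]"
proof -
  have ne: "xs \<noteq> []" and h: "hd xs = u" and l: "last xs = v"
    and c: "\<And>i. Suc i < length xs \<Longrightarrow> covers (xs ! i) (xs ! Suc i)"
    using assms(1) by (auto simp: sat_chains_def)
  obtain ys where xs: "xs = ys @ [v]" using ne l by (metis append_butlast_last_id)
  have ys_ne: "ys \<noteq> []" using xs h assms(2) by auto
  have "covers (ys ! i) (ys ! Suc i)" if "Suc i < length ys" for i
    using c[of i] that by (simp add: xs nth_append)
  then have "ys \<in> sat_chains u (last ys)"
    using ys_ne h by (simp add: sat_chains_def xs)
  moreover have "covers (last ys) v"
    using c[of "length ys - 1"] ys_ne by (simp add: xs nth_append last_conv_nth)
  ultimately show ?thesis by (simp add: xs)
qed

lemma sat_chains_eq_UN_snoc: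
  assumes "u \<noteq> v"
  shows "sat_chains u v = (\<Union>w \<in> {w. covers w v}. (\<lambda>ys. ys @ [v]) ` sat_chains u w)"
  using sat_chain_butlast[OF _ assms] snoc_sat_chain by blast

lemma path_weight_last_step:
  assumes "u \<noteq> v"
  shows "path_weight \<alpha> u v = \<alpha> (npos v) * (\<Sum>w \<in> {w. covers w v}. path_weight \<alpha> u w)"
proof -
  have "path_weight \<alpha> u v =
      (\<Sum>w \<in> {w. covers w v}. \<Sum>xs \<in> (\<lambda>ys. ys @ [v]) ` sat_chains u w. chain_weight \<alpha> xs)"
    unfolding path_weight_def sat_chains_eq_UN_snoc[OF assms]
  proof (rule sum.UNION_disjoint)
    show "\<forall>w \<in> {w. covers w v}. finite ((\<lambda>ys. ys @ [v]) ` sat_chains u w)"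
      by (simp add: finite_sat_chains)
  qed (auto simp: finite_covered_by sat_chains_def)
  also have "\<dots> = (\<Sum>w \<in> {w. covers w v}. \<Sum>ys \<in> sat_chains u w. chain_weight \<alpha> (ys @ [v]))"
    by (simp add: sum.reindex inj_on_def)
  also have "\<dots> = (\<Sum>w \<in> {w. covers w v}. \<Sum>ys \<in> sat_chains u w. \<alpha> (npos v) * chain_weight \<alpha> ys)"
    by (intro sum.cong refl) (auto simp: chain_weight_snoc sat_chains_def)
  finally show ?thesis by (simp add: path_weight_def sum_distrib_left)
qed

lemma finite_level: "finite (level d t)"
proof (rule finite_subset)
  show "level d t \<subseteq> {xs. set xs \<subseteq> {0..t} \<and> length xs = d + 1}"
    unfolding level_def using member_le_sum_list[where ?'a = nat] by fastforce
qed (rule finite_lists_length_eq, simp)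

lemma sum_level_path_weight_not_rising:
  assumes "sum_list v \<le> t"
  shows "(\<Sum>u \<in> level d t. path_weight \<alpha> u v) = (if v \<in> level d t then 1 else 0)"
proof -
  have "(\<Sum>u \<in> level d t - {v}. path_weight \<alpha> u v) = 0"
    using assms by (intro sum.neutral) (auto simp: level_def intro!: path_weight_not_rising)
  then show ?thesis
    using finite_level sum.remove[of "level d t" v "\<lambda>u. path_weight \<alpha> u v"]
    by (auto simp: path_weight_self)
qed

lemma sum_level_path_weight_rising:
  assumes "t < sum_list v"
  shows "(\<Sum>u \<in> level d t. path_weight \<alpha> u v) =
    \<alpha> (npos v) * (\<Sum>w \<in> {w. covers w v}. \<Sum>u \<in> level d t. path_weight \<alpha> u w)"
proof -
  have "(\<Sum>u \<in> level d t. path_weight \<alpha> u v) =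
      (\<Sum>u \<in> level d t. \<alpha> (npos v) * (\<Sum>w \<in> {w. covers w v}. path_weight \<alpha> u w))"
    using assms by (intro sum.cong refl path_weight_last_step) (auto simp: level_def)
  then show ?thesis by (simp add: sum_distrib_left sum.swap[of _ "level d t"])
qed

lemma sum_level_path_weight_le_1:
  fixes \<alpha> :: "nat \<Rightarrow> real"
  assumes \<alpha>: "\<And>i. 1 \<le> i \<Longrightarrow> i \<le> d + 1 \<Longrightarrow> 0 \<le> \<alpha> i \<and> \<alpha> i \<le> 1 / real i"
    and "length v = d + 1"
  shows "(\<Sum>u \<in> level d t. path_weight \<alpha> u v) \<le> 1"
  using assms(2)
proof (induction "sum_list v" arbitrary: v rule: less_induct)
  case less
  show ?case
  proof (cases "sum_list v \<le> t")
    case True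
    then show ?thesis by (simp add: sum_level_path_weight_not_rising)
  next
    case False
    let ?k = "npos v"
    have "1 \<le> ?k" "?k \<le> d + 1"
      using npos_pos[of v] npos_le_length[of v] False less.prems by auto
    with \<alpha> have \<alpha>k: "0 \<le> \<alpha> ?k" "\<alpha> ?k * ?k \<le> 1" by (auto simp: field_simps)
    have "(\<Sum>w \<in> {w. covers w v}. \<Sum>u \<in> level d t. path_weight \<alpha> u w) \<le> card {w. covers w v}"
      using less by (intro sum_bounded_above[of _ _ 1, simplified]) (auto dest: covers_length_sum_list)
    also have "\<dots> \<le> ?k" using card_covered_by_le_npos by simp
    finally have covered_bound: "(\<Sum>w \<in> {w. covers w v}. \<Sum>u \<in> level d t. path_weight \<alpha> u w) \<le> ?k" .
    have "(\<Sum>u \<in> level d t. path_weight \<alpha> u v) =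
        \<alpha> ?k * (\<Sum>w \<in> {w. covers w v}. \<Sum>u \<in> level d t. path_weight \<alpha> u w)"
      using False by (simp add: sum_level_path_weight_rising)
    also have "\<dots> \<le> \<alpha> ?k * ?k" using covered_bound \<alpha>k(1) by (rule mult_left_mono)
    also have "\<dots> \<le> 1" by (fact \<alpha>k(2))
    finally show ?thesis .
  qed
qed

theorem mainTheorem8:
  fixes d t :: nat and \<alpha> :: "nat \<Rightarrow> real" and v :: "nat list"
  assumes "\<forall>i \<in> {1..d+1}. 0 < \<alpha> i \<and> \<alpha> i \<le> 1 / real i"
    and "v \<in> lattice_pts d"
  shows "(\<Sum>u \<in> level d t. path_weight \<alpha> u v) \<le> 1"
  using assms by (intro sum_level_path_weight_le_1) (auto simp: lattice_pts_def less_imp_le)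

end
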